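(* Let $\ell\geq 2$ and $n\geq 0$. There is an equality of multisets $$\{\,r_\ell(\mu)\mid \mu\in\mathrm{Par}_\ell(n)\,\}=\{\,\vartheta_\ell(\lambda)\text{ with multiplicity } m_\ell^n(d)\mid \lambda\in\mathrm{Par}(d),\ 0\leq d\leq\lfloor n/\ell\rfloor\,\},$$ i.e. for every $\lambda\in\mathrm{Par}(d)$ with $d\le\lfloor n/\ell\rfloor$ the value $\vartheta_\ell(\lambda)$ is counted $m_\ell^n(d)$ times, and the resulting multiset coincides with the multiset of values $r_\ell(\mu)$ over the $\ell$-class regular partitions $\mu$ of $n$.
   Context: $\mathrm{Par}(d)$ is the set of partitions of $d$ and $\mathrm{Par}_\ell(n)$ the set of $\ell$-class regular partitions of $n$ (no part divisible by $\ell$); $m_k(\lambda)$ denotes the multiplicity of $k$ as a part of $\lambda$. $P(q)=\prod_{i\ge1}(1-q^i)^{-1}$, $P_\ell(q)=P(q)/P(q^\ell)$, and $m_\ell^n(d)$ is the coefficient of $q^{n-\ell d}$ in $P_\ell(q)/P(q^\ell)$. For an integer $k\geq1$ put $\ell_k=\ell/\gcd(\ell,k)$ and let $\pi_k$ be the set of primes dividing $\ell_k$; for a set of primes $\pi$ and an integer $a$, $a_\pi=\prod_{p\in\pi}a_p$ is the $\pi$-part of $a$. Define $r_\ell(\mu)=\prod_{k\geq1}\ell_k^{\lfloor m_k(\mu)/\ell\rfloor}\,\big(\lfloor m_k(\mu)/\ell\rfloor!\big)_{\pi_k}$. For a prime $p$, $\nu_p$ is the $p$-adic valuation and $d_p(a)=\sum_{j\geq1}\lfloor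 a/p^j\rfloor$; for $r\geq1$, $\vartheta_{p^r}(\lambda)=\prod_{n\geq1,\ 0\leq\nu_p(n)<r}p^{(r-\nu_p(n))m_n(\lambda)+d_p(m_n(\lambda))}$. If $\ell=\prod_{i=1}^s p_i^{r_i}$ is the prime factorization, $\vartheta_\ell(\lambda)=\prod_{i=1}^s\vartheta_{p_i^{r_i}}(\lambda)$. *)

theory Defs
  imports "HOL-Library.Multiset" "HOL-Computational_Algebra.Computational_Algebra"
begin

text \<open>Partitions are represented as multisets of positive integers (their parts);
  the multiplicity m_k(lambda) of the part k is count lambda k.\<close>

definition Par :: "nat \<Rightarrow> nat multiset set" where
  "Par d = {lam. (\<forall>x\<in>#lam. 0 < x) \<and> sum_mset lam = d}"

definition Par_reg :: "nat \<Rightarrow> nat \<Rightarrow> nat multiset set" where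
  "Par_reg l n = {mu \<in> Par n. \<forall>x\<in>#mu. \<not> l dvd x}"

text \<open>P(q) = prod_i (1-q^i)^(-1) = sum_n p(n) q^n, as a formal power series over the rationals.\<close>
definition Pq :: "rat fps" where
  "Pq = Abs_fps (\<lambda>k. of_nat (card (Par k)))"

definition Pq_pow :: "nat \<Rightarrow> rat fps" where
  "Pq_pow l = Pq oo (fps_X ^ l)"

definition P_reg :: "nat \<Rightarrow> rat fps" where
  "P_reg l = Pq / Pq_pow l"

definition mcoef :: "nat \<Rightarrow> nat \<Rightarrow> nat \<Rightarrow> rat" where
  "mcoef l n d = fps_nth (P_reg l / Pq_pow l) (n - l * d)"

definition pi_part :: "nat set \<Rightarrow> nat \<Rightarrow> nat" where
  "pi_part S a = (\<Prod>p\<in>S. p ^ multiplicity p a)"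

definition ell_k :: "nat \<Rightarrow> nat \<Rightarrow> nat" where
  "ell_k l k = l div gcd l k"

definition r_ell :: "nat \<Rightarrow> nat multiset \<Rightarrow> nat" where
  "r_ell l mu = (\<Prod>k\<in>set_mset mu.
      ell_k l k ^ (count mu k div l) *
      pi_part (prime_factors (ell_k l k)) (fact (count mu k div l)))"

text \<open>d_p(a) = sum_{j>=1} floor(a/p^j); terms with j > a vanish for p >= 2.\<close>
definition d_p :: "nat \<Rightarrow> nat \<Rightarrow> nat" where
  "d_p p a = (\<Sum>j\<in>{1..a}. a div p ^ j)"

text \<open>vartheta_{p^r}(lambda); factors with m_n(lambda) = 0 are 1, so the product
  ranges over the parts of lambda.\<close>
definition theta_pp :: "nat \<Rightarrow> nat \<Rightarrow> nat multiset \<Rightarrow> nat" where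
  "theta_pp p r lam = (\<Prod>k\<in>{k\<in>set_mset lam. multiplicity p k < r}.
      p ^ ((r - multiplicity p k) * count lam k + d_p p (count lam k)))"

definition theta :: "nat \<Rightarrow> nat multiset \<Rightarrow> nat" where
  "theta l lam = (\<Prod>p\<in>prime_factors l. theta_pp p (multiplicity p l) lam)"

end

theory Submission
  imports Defs
begin

text \<open>
  Put w(k, a) = ell_k^a (a!)_{pi_k}; note w(k, a) = 1 whenever ell | k. By definition
  r_ell(mu) = prod_k w(k, floor(m_k(mu)/ell)), and Legendre's formula nu_p(a!) = d_p(a) shows
  vartheta_ell(lambda) = prod_k w(k, m_k(lambda)). Hence r_ell(mu) = vartheta_ell(nu) for the
  partition nu with multiplicities floor(m_k(mu)/ell), and vartheta_ell(lambda) only depends on the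
  ell-regular part of lambda.

  Fix a value v and let A(q), C(q) count the ell-regular partitions, resp. all partitions, with
  vartheta_ell = v. Splitting lambda into its ell-regular part and ell times a partition gives
  C(q) = A(q) P(q^ell); splitting an ell-regular mu as ell copies of nu plus a partition with all
  multiplicities below ell, counted by B(q), shows that the left-hand side is the n-th
  coefficient of A(q^ell) B(q). The same two splittings without the condition on vartheta give
  P(q) = R(q) P(q^ell) and R(q) = R(q^ell) B(q) for the generating function R of ell-regular
  partitions, whence B(q) = P_ell(q)/P(q^ell) * P(q^(ell^2)) and
  A(q^ell) B(q) = C(q^ell) P_ell(q)/P(q^ell); the n-th coefficient of the latter is the right-hand side.
\<close>

lemma less_prime_power: "prime (p::nat) \<Longrightarrow> a < p ^ a"
  using less_exp[of a] power_mono[of 2 p a] prime_ge_2_nat[of p] by linarith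

lemma d_p_Suc:
  assumes p: "prime p"
  shows "d_p p (Suc a) = d_p p a + multiplicity p (Suc a)"
proof -
  have Suc_div: "Suc a div p ^ j = a div p ^ j + (if p ^ j dvd Suc a then 1 else 0)" for j
    using p by (simp add: div_Suc dvd_eq_mod_eq_0 prime_gt_0_nat)
  have "(\<Sum>j\<in>{1..Suc a}. a div p ^ j) = d_p p a"
    using less_prime_power[OF p, of "Suc a"] by (simp add: d_p_def)
  moreover have "{j\<in>{1..Suc a}. p ^ j dvd Suc a} = {1..multiplicity p (Suc a)}"
  proof -
    have "p ^ multiplicity p (Suc a) \<le> Suc a"
      by (intro dvd_imp_le multiplicity_dvd) simp
    then have "multiplicity p (Suc a) \<le> Suc a"
      using less_prime_power[OF p, of "multiplicity p (Suc a)"] by linarith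
    moreover have "\<not> is_unit p" using p not_prime_unit by blast
    ultimately show ?thesis by (auto simp: power_dvd_iff_le_multiplicity)
  qed
  then have "(\<Sum>j\<in>{1..Suc a}. if p ^ j dvd Suc a then 1 else 0) = multiplicity p (Suc a)"
    by (simp add: sum.inter_filter[symmetric] del: sum.cl_ivl_Suc)
  ultimately show ?thesis
    by (simp add: d_p_def Suc_div sum.distrib del: sum.cl_ivl_Suc)
qed

lemma multiplicity_fact:
  assumes "prime p"
  shows "multiplicity p (fact a :: nat) = d_p p a"
proof (induction a)
  case 0
  then show ?case by (simp add: d_p_def)
next
  case (Suc a)
  have "multiplicity p (Suc a * fact a :: nat) = multiplicity p (Suc a) + multiplicity p (fact a :: nat)"
    using assms by (intro prime_elem_multiplicity_mult_distrib) auto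
  then show ?case using Suc by (simp add: d_p_Suc[OF assms] del: mult_Suc)
qed

definition part_weight :: "nat \<Rightarrow> nat \<Rightarrow> nat \<Rightarrow> nat" where
  "part_weight l k a = ell_k l k ^ a * pi_part (prime_factors (ell_k l k)) (fact a)"

lemma ell_k_pos: "l > 0 \<Longrightarrow> ell_k l k > 0"
  by (simp add: ell_k_def div_greater_zero_iff gcd_le1_nat)

lemma multiplicity_ell_k:
  assumes "l > 0" "k > 0" "prime p"
  shows "multiplicity p (ell_k l k) = multiplicity p l - multiplicity p k"
proof -
  have "l div gcd l k \<noteq> 0"
    using ell_k_pos[OF assms(1)] by (simp add: ell_k_def)
  then have "multiplicity p l = multiplicity p (gcd l k) + multiplicity p (l div gcd l k)"
    using assms by (subst prime_elem_multiplicity_mult_distrib[symmetric]) auto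
  moreover have "multiplicity p (gcd l k) = min (multiplicity p l) (multiplicity p k)"
    using assms by (intro multiplicity_gcd) auto
  ultimately show ?thesis unfolding ell_k_def by linarith
qed

lemma prime_factors_ell_k:
  assumes "l > 0" "k > 0"
  shows "prime_factors (ell_k l k) = {p\<in>prime_factors l. multiplicity p k < multiplicity p l}"
  using assms multiplicity_ell_k[OF assms] by (auto simp: prime_factors_multiplicity)

lemma part_weight_eq_prod_primes:
  assumes "l > 0" "k > 0"
  shows "part_weight l k a = (\<Prod>p\<in>{p\<in>prime_factors l. multiplicity p k < multiplicity p l}.
            p ^ ((multiplicity p l - multiplicity p k) * a + d_p p a))"
proof -
  let ?S = "{p\<in>prime_factors l. multiplicity p k < multiplicity p l}"
  have "ell_k l k = (\<Prod>p\<in>prime_factors (ell_k l k). p ^ multiplicity p (ell_k l k))"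
    using ell_k_pos[OF assms(1)] by (intro prime_factorization_nat) simp
  also have "\<dots> = (\<Prod>p\<in>?S. p ^ (multiplicity p l - multiplicity p k))"
    using assms by (intro prod.cong)
      (auto simp: prime_factors_ell_k multiplicity_ell_k dest: in_prime_factors_imp_prime)
  finally have "ell_k l k ^ a = (\<Prod>p\<in>?S. p ^ ((multiplicity p l - multiplicity p k) * a))"
    by (simp add: prod_power_distrib power_mult)
  moreover have "pi_part (prime_factors (ell_k l k)) (fact a) = (\<Prod>p\<in>?S. p ^ d_p p a)"
    unfolding pi_part_def prime_factors_ell_k[OF assms]
    by (intro prod.cong) (auto simp: multiplicity_fact dest: in_prime_factors_imp_prime)
  ultimately show ?thesis
    by (simp add: part_weight_def prod.distrib power_add)
qed

lemma theta_eq_prod_part_weight: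
  assumes "l > 0" "\<forall>k\<in>#lam. k > 0"
  shows "theta l lam = (\<Prod>k\<in>set_mset lam. part_weight l k (count lam k))"
proof -
  let ?w = "\<lambda>p k. p ^ ((multiplicity p l - multiplicity p k) * count lam k + d_p p (count lam k))"
  have "theta l lam = (\<Prod>p\<in>prime_factors l. \<Prod>k\<in>set_mset lam.
          if multiplicity p k < multiplicity p l then ?w p k else 1)"
    unfolding theta_def theta_pp_def by (intro prod.cong refl prod.inter_filter) simp
  also have "\<dots> = (\<Prod>k\<in>set_mset lam. \<Prod>p\<in>prime_factors l.
          if multiplicity p k < multiplicity p l then ?w p k else 1)"
    by (rule prod.swap)
  also have "\<dots> = (\<Prod>k\<in>set_mset lam. part_weight l k (count lam k))"
    using assms by (intro prod.cong refl) (simp add: part_weight_eq_prod_primes prod.inter_filter)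
  finally show ?thesis .
qed

lemma part_weight_dvd: "l > 0 \<Longrightarrow> l dvd k \<Longrightarrow> part_weight l k a = 1"
  by (simp add: part_weight_def ell_k_def pi_part_def gcd_nat.absorb1)

lemma part_weight_0 [simp]: "part_weight l k 0 = 1"
  by (simp add: part_weight_def pi_part_def)

definition div_counts :: "nat \<Rightarrow> 'a multiset \<Rightarrow> 'a multiset" where
  "div_counts l M = (\<Sum>x\<in>set_mset M. replicate_mset (count M x div l) x)"

definition mod_counts :: "nat \<Rightarrow> 'a multiset \<Rightarrow> 'a multiset" where
  "mod_counts l M = (\<Sum>x\<in>set_mset M. replicate_mset (count M x mod l) x)"

lemma count_div_counts [simp]: "count (div_counts l M) x = count M x div l"
  by (simp add: div_counts_def count_sum sum.delta' not_in_iff)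

lemma count_mod_counts [simp]: "count (mod_counts l M) x = count M x mod l"
  by (simp add: mod_counts_def count_sum sum.delta' not_in_iff)

lemma in_div_countsD: "x \<in># div_counts l M \<Longrightarrow> x \<in># M"
  by (metis count_div_counts div_0 not_in_iff)

lemma in_mod_countsD: "x \<in># mod_counts l M \<Longrightarrow> x \<in># M"
  by (metis count_mod_counts mod_0 not_in_iff)

lemma repeat_div_counts_plus_mod_counts: "repeat_mset l (div_counts l M) + mod_counts l M = M"
  by (intro multiset_eqI) simp

lemma div_counts_repeat_plus:
  assumes "\<And>x. count B x < l"
  shows "div_counts l (repeat_mset l N + B) = N"
proof (intro multiset_eqI)
  fix x
  show "count (div_counts l (repeat_mset l N + B)) x = count N x"
    using assms[of x] by simp
qed

lemma mod_counts_repeat_plus: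
  assumes "\<And>x. count B x < l"
  shows "mod_counts l (repeat_mset l N + B) = B"
proof (intro multiset_eqI)
  fix x
  show "count (mod_counts l (repeat_mset l N + B)) x = count B x"
    using assms[of x] by simp
qed

abbreviation reg_part :: "nat \<Rightarrow> nat multiset \<Rightarrow> nat multiset" where
  "reg_part l lam \<equiv> filter_mset (\<lambda>k. \<not> l dvd k) lam"

lemma theta_reg_part:
  assumes "l > 0" "\<forall>k\<in>#lam. k > 0"
  shows "theta l (reg_part l lam) = theta l lam"
proof -
  have "(\<Prod>k\<in>set_mset (reg_part l lam). part_weight l k (count (reg_part l lam) k)) =
        (\<Prod>k\<in>set_mset lam. part_weight l k (count lam k))"
    using assms(1) by (intro prod.mono_neutral_cong_left) (auto simp: part_weight_dvd)
  then show ?thesis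
    using assms by (simp add: theta_eq_prod_part_weight)
qed

lemma r_ell_eq_theta_div_counts:
  assumes "l > 0" "\<forall>k\<in>#mu. k > 0"
  shows "r_ell l mu = theta l (div_counts l mu)"
proof -
  have "r_ell l mu = (\<Prod>k\<in>set_mset mu. part_weight l k (count mu k div l))"
    by (simp add: r_ell_def part_weight_def)
  also have "\<dots> = (\<Prod>k\<in>set_mset (div_counts l mu). part_weight l k (count (div_counts l mu) k))"
    by (intro prod.mono_neutral_cong_right) (auto simp: in_div_countsD not_in_iff)
  also have "\<dots> = theta l (div_counts l mu)"
    using assms by (simp add: theta_eq_prod_part_weight in_div_countsD)
  finally show ?thesis .
qed

lemma Par_0: "Par 0 = {{#}}"
  by (auto simp: Par_def) (metis multiset_nonemptyE less_irrefl)

lemma finite_Par: "finite (Par d)"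
proof (rule finite_subset)
  have "size lam \<le> sum_mset lam" if "\<forall>k\<in>#lam. 0 < k" for lam :: "nat multiset"
    using that by (induction lam) auto
  moreover have "k \<le> sum_mset lam" if "k \<in># lam" for k and lam :: "nat multiset"
    using that by (induction lam) auto
  ultimately show "Par d \<subseteq> (\<Union>s\<in>{0..d}. multisets_of_size {1..d} s)"
    by (force simp: Par_def multisets_of_size_def Suc_le_eq)
qed auto

lemma finite_Par_reg: "finite (Par_reg l d)"
  using finite_Par by (simp add: Par_reg_def)

lemma card_eq_sum_card_times_card:
  assumes "finite I" "\<And>i. i \<in> I \<Longrightarrow> finite (T i)" "\<And>i. i \<in> I \<Longrightarrow> finite (U i)"
    and "\<And>i j. i \<in> I \<Longrightarrow> j \<in> I \<Longrightarrow> i \<noteq> j \<Longrightarrow> T i \<inter> T j = {}"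
    and "bij_betw f X (\<Union>i\<in>I. T i \<times> U i)"
  shows "card X = (\<Sum>i\<in>I. card (T i) * card (U i))"
proof -
  have "card X = card (\<Union>i\<in>I. T i \<times> U i)"
    using assms(5) by (rule bij_betw_same_card)
  also have "\<dots> = (\<Sum>i\<in>I. card (T i \<times> U i))"
    using assms(1-4) by (intro card_UN_disjoint) blast+
  finally show ?thesis by (simp add: card_cartesian_product)
qed

abbreviation quot_part :: "nat \<Rightarrow> nat multiset \<Rightarrow> nat multiset" where
  "quot_part l lam \<equiv> image_mset (\<lambda>k. k div l) (filter_mset (\<lambda>k. l dvd k) lam)"

lemma reg_part_plus_scaled_quot_part:
  "reg_part l lam + image_mset ((*) l) (quot_part l lam) = lam"
proof -
  have "image_mset ((*) l) (quot_part l lam) = filter_mset (\<lambda>k. l dvd k) lam"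
    by (induction lam) auto
  then show ?thesis by (metis multiset_partition add.commute)
qed

lemma sum_mset_reg_part_quot_part:
  "sum_mset lam = sum_mset (reg_part l lam) + l * sum_mset (quot_part l lam)"
  by (induction lam) (auto simp: algebra_simps)

lemma reg_part_id: "\<forall>k\<in>#nu. \<not> l dvd k \<Longrightarrow> reg_part l nu = nu"
  by (simp add: filter_mset_eq_conv)

lemma reg_part_scaled [simp]: "reg_part l (image_mset ((*) l) rho) = {#}"
  by (induction rho) auto

lemma quot_part_scaled [simp]: "l > 0 \<Longrightarrow> quot_part l (image_mset ((*) l) rho) = rho"
  by (induction rho) auto

lemma bij_betw_reg_part_quot_part:
  assumes "l > 0"
  shows "bij_betw (\<lambda>lam. (reg_part l lam, quot_part l lam)) {lam\<in>Par d. Q (reg_part l lam)}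
    (\<Union>i\<in>{0..d}. {nu\<in>Par_reg l i. Q nu} \<times> (if l dvd (d - i) then Par ((d - i) div l) else {}))"
    (is "bij_betw ?f ?A ?B")
proof -
  let ?g = "\<lambda>(nu, rho). nu + image_mset ((*) l) rho"
  have "?f lam \<in> ?B" if lam: "lam \<in> ?A" for lam
  proof -
    let ?i = "sum_mset (reg_part l lam)"
    have "d = ?i + l * sum_mset (quot_part l lam)"
      using lam sum_mset_reg_part_quot_part[of lam] by (simp add: Par_def)
    moreover have "\<forall>k\<in>#quot_part l lam. 0 < k"
      using lam assms by (auto simp: Par_def elim!: dvdE)
    ultimately have "?i \<in> {0..d}" "quot_part l lam \<in> Par ((d - ?i) div l)" "l dvd (d - ?i)"
      using assms by (auto simp: Par_def)
    moreover have "reg_part l lam \<in> {nu\<in>Par_reg l ?i. Q nu}"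
      using lam by (auto simp: Par_reg_def Par_def)
    ultimately show ?thesis by auto
  qed
  moreover have "?g p \<in> ?A \<and> ?f (?g p) = p" if "p \<in> ?B" for p
  proof -
    obtain i nu rho where "p = (nu, rho)" "i \<in> {0..d}" "nu \<in> {nu\<in>Par_reg l i. Q nu}"
      and "rho \<in> (if l dvd (d - i) then Par ((d - i) div l) else {})"
      using \<open>p \<in> ?B\<close> by blast
    then show ?thesis
      using assms by (auto simp: Par_reg_def Par_def reg_part_id
          sum_mset_distrib_left[symmetric] split: if_splits)
  qed
  ultimately show ?thesis
    by (intro bij_betw_byWitness[where f' = ?g]) (auto simp: reg_part_plus_scaled_quot_part)
qed

definition Par_reg_mult_lt :: "nat \<Rightarrow> nat \<Rightarrow> nat multiset set" where
  "Par_reg_mult_lt l m = {b\<in>Par_reg l m. \<forall>k. count b k < l}"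

lemma sum_mset_repeat_mset: "sum_mset (repeat_mset n M) = n * sum_mset (M :: nat multiset)"
  by (induction M) (auto simp: algebra_simps)

lemma sum_mset_div_counts_mod_counts:
  "sum_mset M = l * sum_mset (div_counts l M) + sum_mset (mod_counts l M :: nat multiset)"
  by (metis repeat_div_counts_plus_mod_counts sum_mset.union sum_mset_repeat_mset)

lemma in_repeat_msetD: "x \<in># repeat_mset n M \<Longrightarrow> x \<in># M"
  by (metis count_eq_zero_iff count_repeat_mset mult_0_right)

lemma bij_betw_div_counts_mod_counts:
  assumes "l > 0"
  shows "bij_betw (\<lambda>mu. (div_counts l mu, mod_counts l mu)) {mu\<in>Par_reg l n. Q (div_counts l mu)}
    (\<Union>i\<in>{0..n}. (if l dvd i then {nu\<in>Par_reg l (i div l). Q nu} else {}) \<times> Par_reg_mult_lt l (n - i))"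
    (is "bij_betw ?f ?A ?B")
proof -
  let ?g = "\<lambda>(nu, b). repeat_mset l nu + b"
  have "?f mu \<in> ?B" if mu: "mu \<in> ?A" for mu
  proof -
    let ?i = "l * sum_mset (div_counts l mu)"
    have "?i + sum_mset (mod_counts l mu) = n"
      using mu sum_mset_div_counts_mod_counts[of mu l] by (simp add: Par_reg_def Par_def)
    then have "div_counts l mu \<in> {nu\<in>Par_reg l (?i div l). Q nu}"
      and "mod_counts l mu \<in> Par_reg_mult_lt l (n - ?i)"
      using mu assms
      by (auto simp: Par_reg_mult_lt_def Par_reg_def Par_def dest: in_div_countsD in_mod_countsD)
    moreover have "?i \<in> {0..n}"
      using \<open>?i + sum_mset (mod_counts l mu) = n\<close> by simp
    ultimately show ?thesis
      using assms by (intro UN_I[where a = ?i]) auto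
  qed
  moreover have "?g p \<in> ?A \<and> ?f (?g p) = p" if "p \<in> ?B" for p
  proof -
    obtain i nu b where p: "p = (nu, b)" "i \<in> {0..n}" "l dvd i" "nu \<in> {nu\<in>Par_reg l (i div l). Q nu}"
      and b: "b \<in> Par_reg_mult_lt l (n - i)"
      using \<open>p \<in> ?B\<close> by (auto split: if_splits)
    have "div_counts l (?g p) = nu" "mod_counts l (?g p) = b"
      using b p(1) by (simp_all add: Par_reg_mult_lt_def div_counts_repeat_plus mod_counts_repeat_plus)
    moreover have "sum_mset (?g p) = n"
      using p b by (auto simp: Par_reg_mult_lt_def Par_reg_def Par_def sum_mset_repeat_mset)
    moreover have "\<forall>k\<in>#?g p. 0 < k \<and> \<not> l dvd k"
      using p b by (auto simp: Par_reg_mult_lt_def Par_reg_def Par_def dest: in_repeat_msetD)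
    ultimately show ?thesis
      using p by (simp add: Par_reg_def Par_def)
  qed
  ultimately show ?thesis
    by (intro bij_betw_byWitness[where f' = ?g]) (auto simp: repeat_div_counts_plus_mod_counts)
qed

definition card_fps :: "(nat \<Rightarrow> 'a set) \<Rightarrow> rat fps" where
  "card_fps S = Abs_fps (\<lambda>n. of_nat (card (S n)))"

lemma card_fps_Par_reg_part:
  assumes "l > 0"
  shows "card_fps (\<lambda>d. {lam\<in>Par d. Q (reg_part l lam)}) =
    card_fps (\<lambda>i. {nu\<in>Par_reg l i. Q nu}) * Pq_pow l"
proof (rule fps_ext)
  fix d
  have "card {lam\<in>Par d. Q (reg_part l lam)} = (\<Sum>i\<in>{0..d}.
      card {nu\<in>Par_reg l i. Q nu} * card (if l dvd (d - i) then Par ((d - i) div l) else {}))"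
    by (rule card_eq_sum_card_times_card[OF _ _ _ _ bij_betw_reg_part_quot_part[OF assms]])
      (simp_all add: finite_Par finite_Par_reg, auto simp: Par_reg_def Par_def)
  then show "card_fps (\<lambda>d. {lam\<in>Par d. Q (reg_part l lam)}) $ d =
      (card_fps (\<lambda>i. {nu\<in>Par_reg l i. Q nu}) * Pq_pow l) $ d"
    by (simp add: card_fps_def fps_mult_nth Pq_pow_def Pq_def fps_nth_compose_X_power
        if_distrib[of card] if_distrib[of of_nat] cong: if_cong)
qed

lemma card_fps_Par_reg_div_counts:
  assumes "l > 0"
  shows "card_fps (\<lambda>n. {mu\<in>Par_reg l n. Q (div_counts l mu)}) =
    (card_fps (\<lambda>i. {nu\<in>Par_reg l i. Q nu}) oo fps_X ^ l) * card_fps (Par_reg_mult_lt l)"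
proof (rule fps_ext)
  fix n
  have "card {mu\<in>Par_reg l n. Q (div_counts l mu)} = (\<Sum>i\<in>{0..n}.
      card (if l dvd i then {nu\<in>Par_reg l (i div l). Q nu} else {}) * card (Par_reg_mult_lt l (n - i)))"
    by (rule card_eq_sum_card_times_card[OF _ _ _ _ bij_betw_div_counts_mod_counts[OF assms]])
      (simp_all add: finite_Par_reg Par_reg_mult_lt_def, auto simp: Par_reg_def Par_def elim!: dvdE)
  then show "card_fps (\<lambda>n. {mu\<in>Par_reg l n. Q (div_counts l mu)}) $ n =
      ((card_fps (\<lambda>i. {nu\<in>Par_reg l i. Q nu}) oo fps_X ^ l) * card_fps (Par_reg_mult_lt l)) $ n"
    by (simp add: card_fps_def fps_mult_nth fps_nth_compose_X_power
        if_distrib[of card] if_distrib[of of_nat] cong: if_cong)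
qed

lemma Pq_pow_nth_0: "Pq_pow l $ 0 = 1"
  by (simp add: Pq_pow_def Pq_def Par_0)

lemma card_fps_Par_reg_mult_lt:
  assumes "l > 0"
  shows "card_fps (Par_reg_mult_lt l) = P_reg l / Pq_pow l * (Pq_pow l oo fps_X ^ l)"
proof -
  define X :: "rat fps" where "X = fps_X ^ l"
  define P where "P = Pq_pow l"
  define R where "R = card_fps (Par_reg l)"
  define B where "B = card_fps (Par_reg_mult_lt l)"
  have X0: "X $ 0 = 0"
    using assms by (simp add: X_def)
  have P_inverse: "P * inverse P = 1"
    by (intro inverse_mult_eq_1') (simp add: P_def Pq_pow_nth_0)
  have Pq: "Pq = R * P"
    using card_fps_Par_reg_part[OF assms, of "\<lambda>_. True"] by (simp add: R_def P_def Pq_def card_fps_def)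
  have R: "R = (R oo X) * B"
    using card_fps_Par_reg_div_counts[OF assms, of "\<lambda>_. True"] by (simp add: R_def B_def X_def)
  have P: "P = (R oo X) * (P oo X)"
    unfolding fps_compose_mult_distrib[OF X0, symmetric] Pq[symmetric]
    by (simp add: P_def X_def Pq_pow_def)
  have "P_reg l / Pq_pow l * (Pq_pow l oo fps_X ^ l) = R * P * inverse P * inverse P * (P oo X)"
    by (simp add: P_reg_def Pq P_def X_def fps_divide_unit Pq_pow_nth_0)
  also have "\<dots> = B * ((R oo X) * (P oo X)) * inverse P"
    by (subst R) (simp add: P_inverse mult_ac)
  also have "\<dots> = B"
    by (simp flip: P add: P_inverse mult.assoc)
  finally show ?thesis by (simp add: B_def)
qed

lemma card_fps_Par_reg_div_counts_eq_compose:
  assumes "l > 0"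
  shows "card_fps (\<lambda>n. {mu\<in>Par_reg l n. Q (div_counts l mu)}) =
    (card_fps (\<lambda>d. {lam\<in>Par d. Q (reg_part l lam)}) oo fps_X ^ l) * (P_reg l / Pq_pow l)"
proof -
  let ?X = "fps_X ^ l :: rat fps"
  let ?A = "card_fps (\<lambda>i. {nu\<in>Par_reg l i. Q nu})"
  have "(card_fps (\<lambda>d. {lam\<in>Par d. Q (reg_part l lam)}) oo ?X) * (P_reg l / Pq_pow l) =
      (?A oo ?X) * (P_reg l / Pq_pow l * (Pq_pow l oo ?X))"
    using assms by (simp add: card_fps_Par_reg_part fps_compose_mult_distrib mult_ac)
  also have "\<dots> = card_fps (\<lambda>n. {mu\<in>Par_reg l n. Q (div_counts l mu)})"
    by (simp add: card_fps_Par_reg_mult_lt card_fps_Par_reg_div_counts assms)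
  finally show ?thesis ..
qed

lemma fps_compose_X_power_mult_nth:
  fixes f g :: "'a::comm_ring_1 fps"
  assumes "l > 0"
  shows "((f oo fps_X ^ l) * g) $ n = (\<Sum>d=0..n div l. f $ d * g $ (n - l * d))"
proof -
  have multiples: "{i\<in>{0..n}. l dvd i} = (*) l ` {0..n div l}"
    using assms by (auto simp: less_eq_div_iff_mult_less_eq mult.commute elim!: dvdE)
  have "((f oo fps_X ^ l) * g) $ n = (\<Sum>i=0..n. (if l dvd i then f $ (i div l) else 0) * g $ (n - i))"
    by (simp add: fps_mult_nth fps_nth_compose_X_power)
  also have "\<dots> = (\<Sum>i\<in>{i\<in>{0..n}. l dvd i}. f $ (i div l) * g $ (n - i))"
    by (simp add: sum.inter_filter[symmetric] if_distrib[of "\<lambda>x. x * _"] cong: if_cong)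
  also have "\<dots> = (\<Sum>d=0..n div l. f $ d * g $ (n - l * d))"
    using assms unfolding multiples by (subst sum.reindex) (auto simp: inj_on_def)
  finally show ?thesis .
qed

lemma count_image_mset_mset_set:
  "finite S \<Longrightarrow> count (image_mset f (mset_set S)) v = card {x\<in>S. f x = v}"
  by (simp add: count_image_mset' conj_commute eq_commute)

theorem theorem5p2:
  fixes l n :: nat
  assumes "l \<ge> 2"
  shows "\<forall>v::nat.
    of_nat (count (image_mset (r_ell l) (mset_set (Par_reg l n))) v) =
    (\<Sum>d\<in>{0..n div l}. \<Sum>lam\<in>Par d. if theta l lam = v then mcoef l n d else (0::rat))"
proof
  fix v :: nat
  have l: "l > 0" using assms by simp
  let ?Q = "\<lambda>nu. theta l nu = v"
  have "{mu\<in>Par_reg l n. r_ell l mu = v} = {mu\<in>Par_reg l n. ?Q (div_counts l mu)}"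
    using l by (auto simp: Par_reg_def Par_def r_ell_eq_theta_div_counts)
  then have "of_nat (count (image_mset (r_ell l) (mset_set (Par_reg l n))) v) =
      card_fps (\<lambda>n. {mu\<in>Par_reg l n. ?Q (div_counts l mu)}) $ n"
    by (simp add: count_image_mset_mset_set finite_Par_reg card_fps_def)
  also have "\<dots> = ((card_fps (\<lambda>d. {lam\<in>Par d. ?Q (reg_part l lam)}) oo fps_X ^ l) *
      (P_reg l / Pq_pow l)) $ n"
    unfolding card_fps_Par_reg_div_counts_eq_compose[OF l, of ?Q] ..
  also have "(\<lambda>d. {lam\<in>Par d. ?Q (reg_part l lam)}) = (\<lambda>d. {lam\<in>Par d. ?Q lam})"
    using l by (auto simp: Par_def theta_reg_part)
  also have "((card_fps (\<lambda>d. {lam\<in>Par d. ?Q lam}) oo fps_X ^ l) * (P_reg l / Pq_pow l)) $ n =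
      (\<Sum>d=0..n div l. of_nat (card {lam\<in>Par d. ?Q lam}) * mcoef l n d)"
    using l by (simp add: fps_compose_X_power_mult_nth card_fps_def mcoef_def)
  also have "\<dots> = (\<Sum>d\<in>{0..n div l}. \<Sum>lam\<in>Par d. if ?Q lam then mcoef l n d else 0)"
    by (simp add: sum.inter_filter[symmetric] finite_Par)
  finally show "of_nat (count (image_mset (r_ell l) (mset_set (Par_reg l n))) v) =
    (\<Sum>d\<in>{0..n div l}. \<Sum>lam\<in>Par d. if theta l lam = v then mcoef l n d else (0::rat))" .
qed

end
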